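(* Let $\Lambda_i\in\mathcal H_I$, $i\in[n]$ with $n\ge2$, $\mathbb P$ atomless, and $Y\ge0$ with $1<\mathbb E^{\mathbb P}(Y)<\infty$. Then for all $X\in\mathcal X$ $$\mathop{\square}_{i=1}^n\sup_{\mathbb Q\in\mathcal P(\mathbb P,0,Y)}\Lambda_i\mathrm{VaR}^{\mathbb Q}(X)=\inf_{\mathbf y_{n-1}\in\mathbb R^{n-1}}\inf\{x\in\mathbb R:\mathbb E^{\mathbb P}(Y\mathds 1_{\{X>x\}})\le\Lambda^{\mathbf y_{n-1}}(x)\},$$ where for $\mathbf y_{n-1}=(y_1,\dots,y_{n-1})$ and $y_0=0$, $\Lambda^{\mathbf y_{n-1}}(x)=\Lambda_n(x-y_{n-1})+\sum_{i=1}^{n-1}\Lambda_i(y_i-y_{i-1})$.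
   Context: $\Lambda\mathrm{VaR}^{\mathbb Q}(X)=\inf\{x\in\mathbb R:\mathbb Q(X>x)\le\Lambda(x)\}$; $\mathcal H_I$: increasing functions $\mathbb R\to(0,1)$. $\mathcal P(\mathbb P,0,Y)=\{\mathbb Q\ll\mathbb P:0\le\mathrm d\mathbb Q/\mathrm d\mathbb P\le Y\}$. Inf-convolution $\mathop{\square}_i\rho_i(X)=\inf\{\sum_i\rho_i(X_i):X_i\in\mathcal X,\sum_iX_i=X\}$, $\mathcal X$ a set of real-valued random variables containing constants, closed under sums, differences, multiplication by indicators. *)

theory Defs
  imports "HOL-Probability.Probability"
begin

definition atomless :: "'a measure \<Rightarrow> bool" where
  "atomless M \<longleftrightarrow> (\<forall>A\<in>sets M. 0 < measure M A \<longrightarrow>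
      (\<exists>B\<in>sets M. B \<subseteq> A \<and> 0 < measure M B \<and> measure M B < measure M A))"

definition H_I :: "(real \<Rightarrow> real) set" where
  "H_I = {L. mono L \<and> (\<forall>x. 0 < L x \<and> L x < 1)}"

definition LVaR :: "(real \<Rightarrow> real) \<Rightarrow> 'a measure \<Rightarrow> ('a \<Rightarrow> real) \<Rightarrow> ereal" where
  "LVaR L Q X = Inf (ereal ` {x. measure Q {\<omega>\<in>space Q. X \<omega> > x} \<le> L x})"

definition Pset :: "'a measure \<Rightarrow> ('a \<Rightarrow> real) \<Rightarrow> 'a measure set" where
  "Pset M Y = {Q. \<exists>D. D \<in> borel_measurable M \<and> (AE \<omega> in M. 0 \<le> D \<omega> \<and> D \<omega> \<le> Y \<omega>)
       \<and> integral\<^sup>L M D = 1 \<and> Q = density M (\<lambda>\<omega>. ennreal (D \<omega>))}"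

definition admissible_space :: "'a measure \<Rightarrow> ('a \<Rightarrow> real) set \<Rightarrow> bool" where
  "admissible_space M XX \<longleftrightarrow> XX \<subseteq> borel_measurable M
     \<and> (\<forall>c. (\<lambda>_. c) \<in> XX)
     \<and> (\<forall>X\<in>XX. \<forall>Z\<in>XX. (\<lambda>\<omega>. X \<omega> + Z \<omega>) \<in> XX \<and> (\<lambda>\<omega>. X \<omega> - Z \<omega>) \<in> XX)
     \<and> (\<forall>X\<in>XX. \<forall>A\<in>sets M. (\<lambda>\<omega>. indicator A \<omega> * X \<omega>) \<in> XX)"

definition infconv :: "'a measure \<Rightarrow> ('a \<Rightarrow> real) set \<Rightarrow> nat \<Rightarrow> (nat \<Rightarrow> ('a \<Rightarrow> real) \<Rightarrow> ereal)
     \<Rightarrow> ('a \<Rightarrow> real) \<Rightarrow> ereal" where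
  "infconv M XX n \<rho> X = Inf {(\<Sum>i=1..n. \<rho> i (Xs i)) | Xs.
      (\<forall>i\<in>{1..n}. Xs i \<in> XX) \<and> (\<forall>\<omega>\<in>space M. (\<Sum>i=1..n. Xs i \<omega>) = X \<omega>)}"

text \<open>Lambda^y(x), with y_0 = 0 (the value y 0 of the argument is ignored).\<close>
definition Lambda_y :: "nat \<Rightarrow> (nat \<Rightarrow> real \<Rightarrow> real) \<Rightarrow> (nat \<Rightarrow> real) \<Rightarrow> real \<Rightarrow> real" where
  "Lambda_y n L y x = (let y' = (\<lambda>i. if i = 0 then 0 else y i) in
      L n (x - y' (n - 1)) + (\<Sum>i=1..n-1. L i (y' i - y' (i - 1))))"

end

theory Submission
  imports Defs
begin

text \<open>
  Let \<open>\<nu>\<close> be the finite measure with density \<open>Y\<close>. Every \<open>Q \<in> Pset M Y\<close> is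
  setwise below \<open>\<nu>\<close>; conversely, because \<open>E Y > 1\<close>, for any event \<open>B\<close> and any level
  \<open>c < min 1 (\<nu> B)\<close> some \<open>Q \<in> Pset M Y\<close> gives \<open>B\<close> mass above \<open>c\<close>. Hence the robust
  \<open>\<Lambda>\<close>-VaR over \<open>Pset M Y\<close> is the \<open>\<Lambda>\<close>-VaR under \<open>\<nu>\<close>.

  For the inf-convolution under \<open>\<nu>\<close>: if \<open>X = \<Sum>i X\<^sub>i\<close> and \<open>\<nu>(X\<^sub>i > x\<^sub>i) \<le> \<Lambda>\<^sub>i(x\<^sub>i)\<close>,
  then \<open>{X > \<Sum>i x\<^sub>i} \<subseteq> \<Union>i {X\<^sub>i > x\<^sub>i}\<close>, so \<open>\<nu>(X > \<Sum>i x\<^sub>i) \<le> \<Lambda>\<^sup>y(\<Sum>i x\<^sub>i)\<close> where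
  \<open>y\<close> is the sequence of partial sums of the \<open>x\<^sub>i\<close>. Conversely, if \<open>\<nu>(X > x) \<le> \<Lambda>\<^sup>y(x)\<close>,
  split \<open>x\<close> into the increments \<open>x\<^sub>i\<close> of \<open>y\<close>; as \<open>\<nu>\<close> is atomless, the space can be
  partitioned into \<open>P\<^sub>1, \<dots>, P\<^sub>n\<close> with \<open>\<nu>(P\<^sub>i \<inter> {X > x}) \<le> \<Lambda>\<^sub>i(x\<^sub>i)\<close>, and
  \<open>X\<^sub>i = x\<^sub>i + 1\<^bsub>P\<^sub>i\<^esub> (X - x)\<close> is an admissible decomposition of \<open>X\<close> with
  \<open>\<Lambda>\<^sub>i-VaR(X\<^sub>i) \<le> x\<^sub>i\<close>.
\<close>

lemma (in finite_measure) atomless_exists_small_subset: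
  assumes "atomless M" "A \<in> sets M" "0 < measure M A" "0 < e"
  obtains C where "C \<in> sets M" "C \<subseteq> A" "0 < measure M C" "measure M C < e"
proof -
  have halving: "\<exists>C\<in>sets M. C \<subseteq> A \<and> 0 < measure M C \<and> measure M C \<le> measure M A / 2 ^ k" for k
  proof (induction k)
    case 0
    then show ?case using assms by auto
  next
    case (Suc k)
    then obtain C where C: "C \<in> sets M" "C \<subseteq> A" "0 < measure M C" "measure M C \<le> measure M A / 2 ^ k"
      by blast
    then obtain B where B: "B \<in> sets M" "B \<subseteq> C" "0 < measure M B" "measure M B < measure M C"
      using \<open>atomless M\<close> unfolding atomless_def by blast
    have "measure M (C - B) = measure M C - measure M B"
      using B C by (simp add: finite_measure_Diff)
    then consider "measure M B \<le> measure M C / 2" | "measure M (C - B) \<le> measure M C / 2"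
      by linarith
    then show ?case
    proof cases
      case 1
      then show ?thesis using B C by (intro bexI[of _ B]) auto
    next
      case 2
      then show ?thesis using B C \<open>measure M (C - B) = _\<close> by (intro bexI[of _ "C - B"]) auto
    qed
  qed
  obtain k where "measure M A / e < 2 ^ k"
    using real_arch_pow[of 2 "measure M A / e"] by auto
  then have "measure M A / 2 ^ k < e"
    using \<open>0 < e\<close> by (simp add: field_simps)
  with halving[of k] that show ?thesis by fastforce
qed

lemma (in finite_measure) exists_nearly_maximal_extension:
  assumes "C \<in> sets M" "C \<subseteq> A" "A \<in> sets M" "measure M C \<le> v"
  obtains C' where "C' \<in> sets M" "C \<subseteq> C'" "C' \<subseteq> A" "measure M C' \<le> v"
    "\<And>D. D \<in> sets M \<Longrightarrow> D \<subseteq> A - C \<Longrightarrow> measure M C + measure M D \<le> v \<Longrightarrow>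
       measure M D \<le> 2 * (measure M C' - measure M C)"
proof -
  define adm where "adm D \<longleftrightarrow> D \<in> sets M \<and> D \<subseteq> A - C \<and> measure M C + measure M D \<le> v" for D
  define s where "s = Sup (measure M ` Collect adm)"
  have ne: "measure M ` Collect adm \<noteq> {}"
    using assms by (auto simp: adm_def intro!: image_eqI[of _ _ "{}"])
  have bdd: "bdd_above (measure M ` Collect adm)"
    using assms by (intro bdd_aboveI2[of _ _ "measure M A"]) (auto simp: adm_def intro!: finite_measure_mono)
  have "\<exists>D. adm D \<and> s \<le> 2 * measure M D"
  proof (cases "s \<le> 0")
    case True
    then show ?thesis using assms by (intro exI[of _ "{}"]) (auto simp: adm_def)
  next
    case False
    then obtain D where "adm D" "s / 2 < measure M D"
      using less_cSup_iff[OF ne bdd, of "s / 2"] by (auto simp: s_def)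
    then show ?thesis by (intro exI[of _ D]) auto
  qed
  then obtain D where D: "adm D" "s \<le> 2 * measure M D" by blast
  have "measure M (C \<union> D) = measure M C + measure M D"
    using D assms by (intro finite_measure_Union) (auto simp: adm_def)
  moreover have "measure M D' \<le> 2 * measure M D" if "adm D'" for D'
  proof -
    have "measure M D' \<le> s"
      unfolding s_def using that by (intro cSup_upper bdd) auto
    with D(2) show ?thesis by linarith
  qed
  ultimately show ?thesis
    using D assms by (intro that[of "C \<union> D"]) (auto simp: adm_def)
qed

lemma (in finite_measure) exists_greedy_sequence:
  assumes "A \<in> sets M" "0 \<le> v"
  obtains Cs where "\<And>k. Cs k \<in> sets M" "\<And>k. Cs k \<subseteq> A" "\<And>k. measure M (Cs k) \<le> v" "incseq Cs"
    "\<And>k D. D \<in> sets M \<Longrightarrow> D \<subseteq> A - Cs k \<Longrightarrow> measure M (Cs k) + measure M D \<le> v \<Longrightarrow>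
       measure M D \<le> 2 * (measure M (Cs (Suc k)) - measure M (Cs k))"
proof -
  define admissible where "admissible k C \<longleftrightarrow> C \<in> sets M \<and> C \<subseteq> A \<and> measure M C \<le> v"
    for k :: nat and C
  define greedy where "greedy k C C' \<longleftrightarrow> C \<subseteq> C' \<and> (\<forall>D\<in>sets M. D \<subseteq> A - C \<longrightarrow>
      measure M C + measure M D \<le> v \<longrightarrow> measure M D \<le> 2 * (measure M C' - measure M C))"
    for k :: nat and C C'
  have "\<exists>Cs. \<forall>k. admissible k (Cs k) \<and> greedy k (Cs k) (Cs (Suc k))"
  proof (rule dependent_nat_choice)
    show "\<exists>C. admissible 0 C"
      using assms by (auto simp: admissible_def intro!: exI[of _ "{}"])
    show "\<exists>C'. admissible (Suc k) C' \<and> greedy k C C'" if "admissible k C" for k C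
      using exists_nearly_maximal_extension[of C A v] that assms
      unfolding admissible_def greedy_def by metis
  qed
  then obtain Cs where "\<And>k. admissible k (Cs k)" "\<And>k. greedy k (Cs k) (Cs (Suc k))"
    by blast
  then show ?thesis
    by (intro that[of Cs] incseq_SucI) (auto simp: admissible_def greedy_def)
qed

lemma (in finite_measure) atomless_exists_subset_measure:
  assumes "atomless M" "A \<in> sets M" "0 \<le> v" "v \<le> measure M A"
  obtains C where "C \<in> sets M" "C \<subseteq> A" "measure M C = v"
proof -
  obtain Cs where Cs: "\<And>k. Cs k \<in> sets M" "\<And>k. Cs k \<subseteq> A" "\<And>k. measure M (Cs k) \<le> v" "incseq Cs"
    "\<And>k D. D \<in> sets M \<Longrightarrow> D \<subseteq> A - Cs k \<Longrightarrow> measure M (Cs k) + measure M D \<le> v \<Longrightarrow>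
       measure M D \<le> 2 * (measure M (Cs (Suc k)) - measure M (Cs k))"
    using exists_greedy_sequence[OF assms(2,3)] by blast
  define C where "C = (\<Union>k. Cs k)"
  have C: "C \<in> sets M" "C \<subseteq> A"
    using Cs(1,2) by (auto simp: C_def)
  have lim: "(\<lambda>k. measure M (Cs k)) \<longlonglongrightarrow> measure M C"
    unfolding C_def using Cs(1,4) by (intro finite_Lim_measure_incseq) auto
  have "measure M C \<le> v"
    using Cs(3) by (intro LIMSEQ_le_const2[OF lim]) auto
  moreover have "\<not> measure M C < v"
  proof
    \<comment> \<open>A set of small positive measure outside \<open>C\<close> would fit at every stage, so every
      stage would add at least half of its measure.\<close>
    assume "measure M C < v"
    moreover have "0 < measure M (A - C)"
      using C assms \<open>measure M C < v\<close> by (simp add: finite_measure_Diff)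
    ultimately obtain D where D: "D \<in> sets M" "D \<subseteq> A - C" "0 < measure M D"
      "measure M D < v - measure M C"
      using atomless_exists_small_subset[OF \<open>atomless M\<close>, of "A - C" "v - measure M C"] C assms
      by auto
    have step: "measure M (Cs k) + measure M D / 2 \<le> measure M (Cs (Suc k))" for k
    proof -
      have "measure M (Cs k) \<le> measure M C"
        using C Cs(1) by (intro finite_measure_mono) (auto simp: C_def)
      moreover have "D \<subseteq> A - Cs k"
        using D(2) by (auto simp: C_def)
      ultimately show ?thesis
        using Cs(5)[of D k] D by simp
    qed
    have "real k * (measure M D / 2) \<le> measure M (Cs k)" for k
    proof (induction k)
      case (Suc k)
      then show ?case using step[of k] by (simp add: algebra_simps)
    qed simp
    moreover obtain k where "v / (measure M D / 2) < real k"
      using reals_Archimedean2 by blast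
    then have "v < real k * (measure M D / 2)"
      using D by (simp add: field_simps)
    ultimately have "v < measure M (Cs k)"
      by (meson less_le_trans)
    with Cs(3)[of k] show False
      by simp
  qed
  ultimately show ?thesis
    using C that by force
qed

lemma (in finite_measure) atomless_exists_partition:
  assumes "atomless M" "finite I" "I \<noteq> {}" "B \<in> sets M" "\<forall>i\<in>I. 0 \<le> c i"
    "measure M B \<le> (\<Sum>i\<in>I. c i)"
  obtains P where "\<forall>i\<in>I. P i \<in> sets M" "\<forall>i\<in>I. measure M (P i \<inter> B) \<le> c i"
    "disjoint_family_on P I" "(\<Union>i\<in>I. P i) = space M"
proof -
  have "\<exists>P. (\<forall>i\<in>I. P i \<in> sets M) \<and> (\<forall>i\<in>I. measure M (P i \<inter> B) \<le> c i)
      \<and> disjoint_family_on P I \<and> (\<Union>i\<in>I. P i) = space M"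
    using assms(2-6)
  proof (induction I arbitrary: B rule: finite_ne_induct)
    case (singleton i)
    then show ?case
      by (intro exI[of _ "\<lambda>_. space M"]) (auto simp: Int_absorb1 sets.sets_into_space disjoint_family_on_def)
  next
    case (insert i I)
    define a where "a = min (c i) (measure M B)"
    obtain A where A: "A \<in> sets M" "A \<subseteq> B" "measure M A = a"
      using atomless_exists_subset_measure[OF \<open>atomless M\<close> \<open>B \<in> sets M\<close>, of a] insert.prems
      by (auto simp: a_def)
    have "measure M (B - A) = measure M B - a"
      using A insert.prems by (simp add: finite_measure_Diff)
    moreover have "0 \<le> (\<Sum>j\<in>I. c j)"
      using insert.prems(2) by (intro sum_nonneg) auto
    moreover have "measure M B \<le> c i + (\<Sum>j\<in>I. c j)"
      using insert.prems(3) insert.hyps by simp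
    ultimately have "measure M (B - A) \<le> (\<Sum>j\<in>I. c j)"
      unfolding a_def by linarith
    then have "\<exists>P. (\<forall>j\<in>I. P j \<in> sets M) \<and> (\<forall>j\<in>I. measure M (P j \<inter> (B - A)) \<le> c j)
        \<and> disjoint_family_on P I \<and> (\<Union>j\<in>I. P j) = space M"
      using insert.prems A by (intro insert.IH) auto
    then obtain P where P: "\<forall>j\<in>I. P j \<in> sets M" "\<forall>j\<in>I. measure M (P j \<inter> (B - A)) \<le> c j"
      "disjoint_family_on P I" "(\<Union>j\<in>I. P j) = space M"
      by blast
    define P' where "P' j = (if j = i then A else P j - A)" for j
    have "(P j - A) \<inter> B = P j \<inter> (B - A)" for j
      by auto
    then have "\<forall>j\<in>insert i I. P' j \<in> sets M \<and> measure M (P' j \<inter> B) \<le> c j"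
      using A P(1,2) by (auto simp: P'_def Int_absorb2 a_def)
    moreover have "disjoint_family_on P' (insert i I)"
      using P(3) insert.hyps by (auto simp: P'_def disjoint_family_on_def)
    moreover have "(\<Union>j\<in>insert i I. P' j) = space M"
      using P(4) A sets.sets_into_space[OF A(1)] insert.hyps by (auto simp: P'_def)
    ultimately show ?case
      by (intro exI[of _ P']) blast
  qed
  then show ?thesis
    using that by blast
qed

lemma measure_density_eq_integral:
  fixes f :: "'a \<Rightarrow> real"
  assumes [measurable]: "f \<in> borel_measurable M" "A \<in> sets M"
    and "AE x in M. 0 \<le> f x" "integrable M f"
  shows "measure (density M f) A = integral\<^sup>L M (\<lambda>x. f x * indicator A x)"
proof -
  have "emeasure (density M f) A = (\<integral>\<^sup>+ x. ennreal (f x) * indicator A x \<partial>M)"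
    by (rule emeasure_density) auto
  also have "\<dots> = (\<integral>\<^sup>+ x. ennreal (f x * indicator A x) \<partial>M)"
    by (intro nn_integral_cong) (auto simp: indicator_def)
  also have "\<dots> = ennreal (integral\<^sup>L M (\<lambda>x. f x * indicator A x))"
    using assms by (intro nn_integral_eq_integral integrable_real_mult_indicator)
      (auto simp: indicator_def elim!: eventually_mono)
  moreover have "0 \<le> integral\<^sup>L M (\<lambda>x. f x * indicator A x)"
    using assms by (intro integral_nonneg_AE) (auto simp: indicator_def elim!: eventually_mono)
  ultimately show ?thesis
    by (simp add: measure_def)
qed

lemma finite_measure_density_integrable:
  fixes f :: "'a \<Rightarrow> real"
  assumes "integrable M f" "AE x in M. 0 \<le> f x"
  shows "finite_measure (density M f)"
proof (rule finite_measureI)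
  have "emeasure (density M f) (space (density M f)) = (\<integral>\<^sup>+ x. ennreal (f x) * indicator (space M) x \<partial>M)"
    using assms by (subst emeasure_density) auto
  also have "\<dots> = (\<integral>\<^sup>+ x. ennreal (f x) \<partial>M)"
    by (intro nn_integral_cong) auto
  also have "\<dots> = ennreal (integral\<^sup>L M f)"
    using assms by (intro nn_integral_eq_integral)
  finally show "emeasure (density M f) (space (density M f)) \<noteq> \<infinity>"
    by simp
qed

lemma measure_density_mono:
  fixes f g :: "'a \<Rightarrow> real"
  assumes [measurable]: "f \<in> borel_measurable M" "A \<in> sets M"
    and "integrable M g" "AE x in M. 0 \<le> f x \<and> f x \<le> g x"
  shows "measure (density M f) A \<le> measure (density M g) A"
proof -
  have f_nonneg: "AE x in M. 0 \<le> f x"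
    using assms(4) by eventually_elim simp
  have g_nonneg: "AE x in M. 0 \<le> g x"
    using assms(4) by eventually_elim simp
  have "AE x in M. norm (f x) \<le> norm (g x)"
    using assms(4) by eventually_elim auto
  then have "integrable M f"
    using Bochner_Integration.integrable_bound[OF assms(3) assms(1)] by blast
  have "integral\<^sup>L M (\<lambda>x. f x * indicator A x) \<le> integral\<^sup>L M (\<lambda>x. g x * indicator A x)"
  proof (rule integral_mono_AE)
    show "integrable M (\<lambda>x. f x * indicator A x)" "integrable M (\<lambda>x. g x * indicator A x)"
      using \<open>integrable M f\<close> assms(3) by (auto intro: integrable_real_mult_indicator)
    show "AE x in M. f x * indicator A x \<le> g x * indicator A x"
      using assms(4) by eventually_elim (auto simp: indicator_def)
  qed
  then show ?thesis
    using \<open>integrable M f\<close> assms(3) f_nonneg g_nonneg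
    by (simp add: measure_density_eq_integral)
qed

lemma measure_density_eq_0_iff:
  fixes f :: "'a \<Rightarrow> real"
  assumes "finite_measure M" "integrable M f" "AE x in M. 0 \<le> f x" and [measurable]: "S \<in> sets M"
  shows "measure (density M f) S = 0 \<longleftrightarrow> measure M (S \<inter> {x\<in>space M. 0 < f x}) = 0"
proof -
  interpret M: finite_measure M by fact
  interpret N: finite_measure "density M f"
    using assms(2,3) by (rule finite_measure_density_integrable)
  have [measurable]: "f \<in> borel_measurable M"
    using assms(2) by auto
  have "measure (density M f) S = 0 \<longleftrightarrow> S \<in> null_sets (density M f)"
    by (simp add: N.emeasure_eq_measure null_sets_def)
  also have "\<dots> \<longleftrightarrow> (AE x in M. x \<in> S \<longrightarrow> ennreal (f x) = 0)"
    by (simp add: null_sets_density_iff)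
  also have "\<dots> \<longleftrightarrow> (AE x in M. x \<notin> S \<inter> {x\<in>space M. 0 < f x})"
    by (intro AE_cong) (auto simp: not_less ennreal_eq_0_iff)
  also have "\<dots> \<longleftrightarrow> S \<inter> {x\<in>space M. 0 < f x} \<in> null_sets M"
    by (rule AE_iff_null_sets[symmetric]) measurable
  also have "\<dots> \<longleftrightarrow> measure M (S \<inter> {x\<in>space M. 0 < f x}) = 0"
    by (simp add: M.emeasure_eq_measure null_sets_def)
  finally show ?thesis .
qed

lemma atomless_density:
  fixes f :: "'a \<Rightarrow> real"
  assumes "finite_measure M" "atomless M" "integrable M f" "AE x in M. 0 \<le> f x"
  shows "atomless (density M f)"
  unfolding atomless_def
proof (intro ballI impI)
  interpret M: finite_measure M by fact
  interpret N: finite_measure "density M f"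
    using assms(3,4) by (rule finite_measure_density_integrable)
  have [measurable]: "f \<in> borel_measurable M"
    using assms(3) by auto
  define pos where "pos = {x\<in>space M. 0 < f x}"
  have positive_iff: "0 < measure (density M f) S \<longleftrightarrow> 0 < measure M S" if "S \<in> sets M" "S \<subseteq> pos" for S
  proof -
    have "measure (density M f) S = 0 \<longleftrightarrow> measure M S = 0"
      using measure_density_eq_0_iff[OF assms(1,3,4) that(1)] that(2) by (simp add: pos_def Int_absorb2)
    then show ?thesis
      by (metis less_eq_real_def measure_nonneg)
  qed
  fix A assume A: "A \<in> sets (density M f)" "0 < measure (density M f) A"
  have A_pos: "A \<inter> pos \<in> sets M"
    using A(1) by (simp add: pos_def)
  have "0 < measure M (A \<inter> pos)"
    using measure_density_eq_0_iff[OF assms(1,3,4), of A] A measure_nonneg[of M "A \<inter> pos"]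
    by (simp add: pos_def less_eq_real_def)
  then obtain B where B: "B \<in> sets M" "B \<subseteq> A \<inter> pos" "0 < measure M B"
    "measure M B < measure M (A \<inter> pos)"
    using \<open>atomless M\<close> A_pos unfolding atomless_def by blast
  have "0 < measure M (A \<inter> pos - B)"
    using B A_pos by (simp add: M.finite_measure_Diff)
  then have "0 < measure (density M f) (A \<inter> pos - B)"
    using positive_iff[of "A \<inter> pos - B"] A_pos B by auto
  moreover have "measure (density M f) (A \<inter> pos - B) \<le> measure (density M f) (A - B)"
    using A B by (intro N.finite_measure_mono) auto
  moreover have "measure (density M f) (A - B) = measure (density M f) A - measure (density M f) B"
    using A B by (intro N.finite_measure_Diff) auto
  moreover have "0 < measure (density M f) B"
    using positive_iff[of B] B by auto
  ultimately show "\<exists>B\<in>sets (density M f). B \<subseteq> A \<and> 0 < measure (density M f) B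
      \<and> measure (density M f) B < measure (density M f) A"
    using B by (intro bexI[of _ B]) auto
qed

lemma LVaR_mono_tail:
  assumes "\<And>x. measure Q {\<omega>\<in>space Q. Z \<omega> > x} \<le> measure N {\<omega>\<in>space N. Z \<omega> > x}"
  shows "LVaR L Q Z \<le> LVaR L N Z"
  unfolding LVaR_def
proof (intro Inf_superset_mono image_mono subsetI)
  fix x assume "x \<in> {x. measure N {\<omega>\<in>space N. Z \<omega> > x} \<le> L x}"
  with assms[of x] show "x \<in> {x. measure Q {\<omega>\<in>space Q. Z \<omega> > x} \<le> L x}"
    by simp
qed

lemma LVaR_le_of_tail_le:
  assumes "measure M {\<omega>\<in>space M. Z \<omega> > x} \<le> L x"
  shows "LVaR L M Z \<le> ereal x"
  unfolding LVaR_def using assms by (intro Inf_lower) auto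

lemma (in finite_measure) LVaR_ge_of_tail_gt:
  assumes "mono L" "Z \<in> borel_measurable M" "L t < measure M {\<omega>\<in>space M. Z \<omega> > t}"
  shows "ereal t \<le> LVaR L M Z"
  unfolding LVaR_def
proof (rule Inf_greatest, clarify)
  fix x assume x: "measure M {\<omega>\<in>space M. Z \<omega> > x} \<le> L x"
  show "ereal t \<le> ereal x"
  proof (rule ccontr)
    assume "\<not> ereal t \<le> ereal x"
    then have "x < t"
      by simp
    then have "measure M {\<omega>\<in>space M. Z \<omega> > t} \<le> measure M {\<omega>\<in>space M. Z \<omega> > x}"
      using assms(2) by (intro finite_measure_mono) auto
    moreover have "L x \<le> L t"
      using \<open>x < t\<close> assms(1) by (simp add: monoD)
    ultimately show False
      using x assms(3) by simp
  qed
qed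

lemma (in finite_measure) exists_tail_less:
  fixes Z :: "'a \<Rightarrow> real"
  assumes [measurable]: "Z \<in> borel_measurable M" and "0 < e"
  obtains a where "measure M {\<omega>\<in>space M. Z \<omega> > a} < e"
proof -
  have "(\<lambda>k. measure M {\<omega>\<in>space M. Z \<omega> > real k}) \<longlonglongrightarrow> measure M (\<Inter>k. {\<omega>\<in>space M. Z \<omega> > real k})"
    by (rule finite_Lim_measure_decseq) (auto simp: decseq_def)
  moreover have "(\<Inter>k. {\<omega>\<in>space M. Z \<omega> > real k}) = {}"
  proof -
    have "\<not> (\<forall>k. Z \<omega> > real k)" for \<omega>
      using reals_Archimedean2[of "Z \<omega>"] by (auto simp: not_less intro: less_imp_le)
    then show ?thesis
      by auto
  qed
  ultimately have "\<forall>\<^sub>F k in sequentially. measure M {\<omega>\<in>space M. Z \<omega> > real k} < e"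
    using order_tendstoD(2)[OF _ \<open>0 < e\<close>] by simp
  with that show ?thesis
    by (auto simp: eventually_sequentially)
qed

lemma (in finite_measure) exists_tail_greater:
  fixes Z :: "'a \<Rightarrow> real"
  assumes [measurable]: "Z \<in> borel_measurable M" and "e < measure M (space M)"
  obtains a where "e < measure M {\<omega>\<in>space M. Z \<omega> > a}"
proof -
  have "(\<lambda>k. measure M {\<omega>\<in>space M. Z \<omega> > - real k}) \<longlonglongrightarrow> measure M (\<Union>k. {\<omega>\<in>space M. Z \<omega> > - real k})"
    by (rule finite_Lim_measure_incseq) (auto simp: incseq_def)
  moreover have "(\<Union>k. {\<omega>\<in>space M. Z \<omega> > - real k}) = space M"
  proof -
    have "\<exists>k. Z \<omega> > - real k" for \<omega>
      using reals_Archimedean2[of "- Z \<omega>"] by (auto simp: minus_less_iff)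
    then show ?thesis
      by auto
  qed
  ultimately have "\<forall>\<^sub>F k in sequentially. e < measure M {\<omega>\<in>space M. Z \<omega> > - real k}"
    using order_tendstoD(1)[OF _ \<open>e < measure M (space M)\<close>] by simp
  with that show ?thesis
    by (auto simp: eventually_sequentially)
qed

lemma (in finite_measure) LVaR_real:
  assumes "L \<in> H_I" and [measurable]: "Z \<in> borel_measurable M" and "1 < measure M (space M)"
  obtains r where "LVaR L M Z = ereal r" "\<And>x. r < x \<Longrightarrow> measure M {\<omega>\<in>space M. Z \<omega> > x} \<le> L x"
proof -
  define F where "F x = measure M {\<omega>\<in>space M. Z \<omega> > x}" for x
  define S where "S = {x. F x \<le> L x}"
  have L: "mono L" "\<And>x. 0 < L x" "\<And>x. L x < 1"
    using assms by (auto simp: H_I_def)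
  have F_antimono: "F x' \<le> F x" if "x \<le> x'" for x x'
    unfolding F_def using that by (intro finite_measure_mono) auto
  have S_upward: "x' \<in> S" if "x \<in> S" "x \<le> x'" for x x'
    using F_antimono[OF \<open>x \<le> x'\<close>] monoD[OF L(1) \<open>x \<le> x'\<close>] that(1) by (simp add: S_def)
  obtain a where "F a < L 0"
    using exists_tail_less[OF assms(2) L(2)] unfolding F_def by auto
  then have "max a 0 \<in> S"
    using F_antimono[of a "max a 0"] monoD[OF L(1), of 0 "max a 0"] by (simp add: S_def)
  then have "S \<noteq> {}"
    by auto
  obtain b where "1 < F b"
    using exists_tail_greater[OF assms(2) assms(3)] unfolding F_def by auto
  have "b < x" if "x \<in> S" for x
  proof (rule ccontr)
    assume "\<not> b < x"
    then have "F b \<le> L x"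
      using F_antimono[of x b] that by (simp add: S_def)
    with \<open>1 < F b\<close> L(3)[of x] show False
      by simp
  qed
  then have "bdd_below S"
    by (meson bdd_belowI less_imp_le)
  have "x \<in> S" if x: "Inf S < x" for x
  proof -
    obtain s where "s \<in> S" "s < x"
      using cInf_less_iff[OF \<open>S \<noteq> {}\<close> \<open>bdd_below S\<close>] x by auto
    then show ?thesis
      using S_upward less_imp_le by blast
  qed
  moreover have "LVaR L M Z = ereal (Inf S)"
    using ereal_Inf'[OF \<open>bdd_below S\<close> \<open>S \<noteq> {}\<close>] by (simp add: LVaR_def S_def F_def)
  ultimately show ?thesis
    using that by (auto simp: S_def F_def)
qed

lemma prob_space_Pset:
  assumes "Q \<in> Pset M Y" "integrable M Y"
  shows "prob_space Q"
proof
  obtain D where [measurable]: "D \<in> borel_measurable M"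
    and D_bounds: "AE \<omega> in M. 0 \<le> D \<omega> \<and> D \<omega> \<le> Y \<omega>"
    and "integral\<^sup>L M D = 1" "Q = density M D"
    using assms(1) by (auto simp: Pset_def)
  have D_norm: "AE \<omega> in M. norm (D \<omega>) \<le> norm (Y \<omega>)" and "AE \<omega> in M. 0 \<le> D \<omega>"
    using D_bounds by (eventually_elim, auto)+
  have "integrable M D"
    by (rule Bochner_Integration.integrable_bound[OF assms(2) _ D_norm]) measurable
  have "emeasure Q (space Q) = (\<integral>\<^sup>+ x. ennreal (D x) * indicator (space M) x \<partial>M)"
    using \<open>Q = density M D\<close> by (simp add: emeasure_density)
  also have "\<dots> = (\<integral>\<^sup>+ x. ennreal (D x) \<partial>M)"
    by (intro nn_integral_cong) auto
  also have "\<dots> = ennreal (integral\<^sup>L M D)"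
    using \<open>integrable M D\<close> \<open>AE \<omega> in M. 0 \<le> D \<omega>\<close> by (rule nn_integral_eq_integral)
  finally show "emeasure Q (space Q) = 1"
    using \<open>integral\<^sup>L M D = 1\<close> by simp
qed

lemma Pset_exists_measure_gt:
  assumes [measurable]: "Y \<in> borel_measurable M" "B \<in> sets M"
    and "\<forall>\<omega>\<in>space M. 0 \<le> Y \<omega>" "integrable M Y" "1 < integral\<^sup>L M Y"
    and "c < 1" "c < measure (density M Y) B"
  obtains Q where "Q \<in> Pset M Y" "c < measure Q B"
proof -
  define a where "a = integral\<^sup>L M (\<lambda>\<omega>. Y \<omega> * indicator B \<omega>)"
  define m where "m = integral\<^sup>L M Y"
  have "measure (density M Y) B = a"
    unfolding a_def using assms by (intro measure_density_eq_integral) auto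
  obtain \<alpha> \<beta> where ab: "0 \<le> \<alpha>" "\<alpha> \<le> 1" "0 \<le> \<beta>" "\<beta> \<le> 1" "\<alpha> * a + \<beta> * (m - a) = 1" "c < \<alpha> * a"
  proof (cases "1 \<le> a")
    case True
    then show ?thesis
      using that[of "1 / a" 0] assms by auto
  next
    case False
    then show ?thesis
      using that[of 1 "(1 - a) / (m - a)"] assms \<open>measure (density M Y) B = a\<close>
      by (auto simp: field_simps m_def)
  qed
  define D where "D = (\<lambda>\<omega>. \<beta> * Y \<omega> + (\<alpha> - \<beta>) * (Y \<omega> * indicator B \<omega>))"
  have [measurable]: "D \<in> borel_measurable M"
    unfolding D_def by measurable
  have "integrable M D"
    unfolding D_def using assms(2,4)
    by (intro Bochner_Integration.integrable_add integrable_mult_right integrable_real_mult_indicator)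
  have "\<forall>\<omega>\<in>space M. 0 \<le> D \<omega> \<and> D \<omega> \<le> Y \<omega>"
    using ab assms(3) by (auto simp: D_def indicator_def algebra_simps intro: mult_left_le_one_le)
  moreover have "integral\<^sup>L M D = \<alpha> * a + \<beta> * (m - a)"
    unfolding D_def a_def m_def using assms(2,4) by (simp add: integrable_real_mult_indicator algebra_simps)
  then have "integral\<^sup>L M D = 1"
    using ab(5) by simp
  moreover have "measure (density M D) B = \<alpha> * a"
  proof -
    have "measure (density M D) B = integral\<^sup>L M (\<lambda>\<omega>. D \<omega> * indicator B \<omega>)"
      using calculation \<open>integrable M D\<close> by (intro measure_density_eq_integral) (auto intro: AE_I2)
    also have "(\<lambda>\<omega>. D \<omega> * indicator B \<omega>) = (\<lambda>\<omega>. \<alpha> * (Y \<omega> * indicator B \<omega>))"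
      by (auto simp: D_def indicator_def fun_eq_iff algebra_simps)
    finally show ?thesis
      by (simp add: a_def)
  qed
  ultimately have "density M D \<in> Pset M Y"
    unfolding Pset_def using \<open>D \<in> borel_measurable M\<close>
    by (intro CollectI exI[of _ D]) (auto intro: AE_I2)
  with \<open>measure (density M D) B = \<alpha> * a\<close> ab(6) show ?thesis
    by (intro that) auto
qed

lemma Pset_exists_LVaR_ge:
  assumes [measurable]: "Y \<in> borel_measurable M" "Z \<in> borel_measurable M"
    and "\<forall>\<omega>\<in>space M. 0 \<le> Y \<omega>" "integrable M Y" "1 < integral\<^sup>L M Y" "L \<in> H_I"
    and "ereal t < LVaR L (density M Y) Z"
  obtains Q where "Q \<in> Pset M Y" "ereal t \<le> LVaR L Q Z"
proof -
  define B where "B = {\<omega>\<in>space M. Z \<omega> > t}"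
  have [measurable]: "B \<in> sets M"
    unfolding B_def by measurable
  have "L t < measure (density M Y) B"
  proof (rule ccontr)
    assume "\<not> L t < measure (density M Y) B"
    then have "LVaR L (density M Y) Z \<le> ereal t"
      by (intro LVaR_le_of_tail_le) (simp add: B_def)
    with assms(7) show False
      by simp
  qed
  then obtain Q where Q: "Q \<in> Pset M Y" "L t < measure Q B"
    using Pset_exists_measure_gt[of Y M B "L t"] assms by (auto simp: H_I_def)
  then interpret Q: prob_space Q
    using assms by (intro prob_space_Pset)
  have "space Q = space M" "sets Q = sets M"
    using Q(1) by (auto simp: Pset_def)
  then have "ereal t \<le> LVaR L Q Z"
    using Q(2) assms(6) measurable_cong_sets[of Q M borel borel]
    by (intro Q.LVaR_ge_of_tail_gt) (auto simp: H_I_def B_def)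
  with Q(1) show ?thesis
    by (rule that)
qed

lemma LVaR_density:
  fixes Y Z :: "'a \<Rightarrow> real"
  assumes [measurable]: "Y \<in> borel_measurable M" "Z \<in> borel_measurable M"
    and "AE \<omega> in M. 0 \<le> Y \<omega>" "integrable M Y"
  shows "LVaR L (density M Y) Z
    = Inf (ereal ` {x. integral\<^sup>L M (\<lambda>\<omega>. Y \<omega> * indicator {\<omega>\<in>space M. Z \<omega> > x} \<omega>) \<le> L x})"
proof -
  have "{\<omega>\<in>space M. Z \<omega> > x} \<in> sets M" for x
    by measurable
  then show ?thesis
    unfolding LVaR_def using assms by (simp add: measure_density_eq_integral)
qed

lemma SUP_Pset_LVaR:
  assumes [measurable]: "Y \<in> borel_measurable M" "Z \<in> borel_measurable M"
    and "\<forall>\<omega>\<in>space M. 0 \<le> Y \<omega>" "integrable M Y" "1 < integral\<^sup>L M Y" "L \<in> H_I"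
  shows "(SUP Q\<in>Pset M Y. LVaR L Q Z) = LVaR L (density M Y) Z"
proof (rule antisym)
  show "(SUP Q\<in>Pset M Y. LVaR L Q Z) \<le> LVaR L (density M Y) Z"
  proof (rule SUP_least)
    fix Q assume "Q \<in> Pset M Y"
    then obtain D where [measurable]: "D \<in> borel_measurable M"
      and "AE \<omega> in M. 0 \<le> D \<omega> \<and> D \<omega> \<le> Y \<omega>" "Q = density M D"
      by (auto simp: Pset_def)
    then show "LVaR L Q Z \<le> LVaR L (density M Y) Z"
      using assms by (intro LVaR_mono_tail) (simp add: measure_density_mono)
  qed
  show "LVaR L (density M Y) Z \<le> (SUP Q\<in>Pset M Y. LVaR L Q Z)"
  proof (rule dense_le)
    fix y assume y: "y < LVaR L (density M Y) Z"
    show "y \<le> (SUP Q\<in>Pset M Y. LVaR L Q Z)"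
    proof (cases y)
      case (real t)
      then obtain Q where "Q \<in> Pset M Y" "ereal t \<le> LVaR L Q Z"
        using Pset_exists_LVaR_ge[OF assms] y by blast
      then show ?thesis
        using real by (auto intro: SUP_upper2)
    qed (use y in auto)
  qed
qed

lemma Lambda_y_partial_sums:
  assumes "1 \<le> n"
  shows "Lambda_y n L (\<lambda>k. \<Sum>i=1..k. d i) (\<Sum>i=1..n. d i) = (\<Sum>i=1..n. L i (d i))"
proof -
  obtain m where n: "n = Suc m"
    using assms by (cases n) auto
  define y where "y k = (\<Sum>i=1..k. d i)" for k
  have y0: "(\<lambda>i. if i = 0 then 0 else y i) = y"
    by (auto simp: y_def)
  have increment: "y i - y (i - 1) = d i" if "1 \<le> i" for i
    using that by (cases i) (auto simp: y_def sum.cl_ivl_Suc)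
  have "Lambda_y n L y (y n) = L n (d n) + (\<Sum>i=1..m. L i (y i - y (i - 1)))"
    unfolding Lambda_y_def Let_def y0 n using increment[of "Suc m"] by simp
  also have "\<dots> = (\<Sum>i=1..n. L i (d i))"
    using increment by (simp add: n sum.cl_ivl_Suc)
  finally show ?thesis
    by (simp add: y_def[abs_def])
qed

lemma Lambda_y_as_sum:
  assumes "1 \<le> n"
  obtains d where "(\<Sum>i=1..n. d i) = x" "Lambda_y n L y x = (\<Sum>i=1..n. L i (d i))"
proof -
  obtain m where n: "n = Suc m"
    using assms by (cases n) auto
  define y' where "y' i = (if i = 0 then 0 else y i)" for i
  define d where "d i = (if i \<le> m then y' i - y' (i - 1) else x - y' m)" for i
  have "(\<Sum>i=1..m. d i) = (\<Sum>i=Suc 0..m. y' i - y' (i - 1))"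
    by (intro sum.cong) (auto simp: d_def)
  also have "\<dots> = y' m - y' 0"
    by (rule sum_telescope'') simp
  also have "\<dots> = y' m"
    by (simp add: y'_def)
  finally have sum_d: "(\<Sum>i=1..n. d i) = x"
    by (simp add: n sum.cl_ivl_Suc d_def)
  have "Lambda_y n L y x = L n (x - y' m) + (\<Sum>i=1..m. L i (y' i - y' (i - 1)))"
    unfolding Lambda_y_def Let_def n y'_def by simp
  moreover have "(\<Sum>i=1..m. L i (y' i - y' (i - 1))) = (\<Sum>i=1..m. L i (d i))"
    by (intro sum.cong) (auto simp: d_def)
  moreover have "d n = x - y' m"
    by (simp add: n d_def)
  ultimately have "Lambda_y n L y x = (\<Sum>i=1..n. L i (d i))"
    by (simp add: n sum.cl_ivl_Suc)
  with sum_d show ?thesis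
    by (rule that)
qed

lemma (in finite_measure) LVaR_Lambda_y_partial_sums_le:
  fixes X :: "'a \<Rightarrow> real" and Xs :: "nat \<Rightarrow> 'a \<Rightarrow> real"
  assumes "1 \<le> n" "\<And>i. i \<in> {1..n} \<Longrightarrow> Xs i \<in> borel_measurable M"
    and "\<forall>\<omega>\<in>space M. (\<Sum>i=1..n. Xs i \<omega>) = X \<omega>"
    and "\<And>i. i \<in> {1..n} \<Longrightarrow> measure M {\<omega>\<in>space M. Xs i \<omega> > d i} \<le> L i (d i)"
  shows "LVaR (Lambda_y n L (\<lambda>k. \<Sum>i=1..k. d i)) M X \<le> ereal (\<Sum>i=1..n. d i)"
proof -
  have "{\<omega>\<in>space M. X \<omega> > (\<Sum>i=1..n. d i)} \<subseteq> (\<Union>i\<in>{1..n}. {\<omega>\<in>space M. Xs i \<omega> > d i})"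
  proof
    fix \<omega> assume \<omega>: "\<omega> \<in> {\<omega>\<in>space M. X \<omega> > (\<Sum>i=1..n. d i)}"
    show "\<omega> \<in> (\<Union>i\<in>{1..n}. {\<omega>\<in>space M. Xs i \<omega> > d i})"
    proof (rule ccontr)
      assume "\<omega> \<notin> (\<Union>i\<in>{1..n}. {\<omega>\<in>space M. Xs i \<omega> > d i})"
      then have "(\<Sum>i=1..n. Xs i \<omega>) \<le> (\<Sum>i=1..n. d i)"
        using \<omega> by (intro sum_mono) (auto simp: not_less)
      with \<omega> assms(3) show False
        by auto
    qed
  qed
  moreover have sets: "\<And>i. i \<in> {1..n} \<Longrightarrow> {\<omega>\<in>space M. Xs i \<omega> > d i} \<in> sets M"
    using assms(2) by measurable
  ultimately have "measure M {\<omega>\<in>space M. X \<omega> > (\<Sum>i=1..n. d i)}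
      \<le> measure M (\<Union>i\<in>{1..n}. {\<omega>\<in>space M. Xs i \<omega> > d i})"
    by (intro finite_measure_mono) auto
  also have "\<dots> \<le> (\<Sum>i=1..n. measure M {\<omega>\<in>space M. Xs i \<omega> > d i})"
    using sets by (intro measure_UNION_le) auto
  also have "\<dots> \<le> (\<Sum>i=1..n. L i (d i))"
    using assms(4) by (intro sum_mono) auto
  also have "\<dots> = Lambda_y n L (\<lambda>k. \<Sum>i=1..k. d i) (\<Sum>i=1..n. d i)"
    using Lambda_y_partial_sums[OF assms(1)] by simp
  finally show ?thesis
    by (rule LVaR_le_of_tail_le)
qed

lemma (in finite_measure) INF_LVaR_Lambda_y_le_sum:
  fixes X :: "'a \<Rightarrow> real" and Xs :: "nat \<Rightarrow> 'a \<Rightarrow> real"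
  assumes "1 \<le> n" "1 < measure M (space M)" "\<forall>i\<in>{1..n}. L i \<in> H_I"
    and "\<forall>i\<in>{1..n}. Xs i \<in> borel_measurable M" "\<forall>\<omega>\<in>space M. (\<Sum>i=1..n. Xs i \<omega>) = X \<omega>"
  shows "(INF y. LVaR (Lambda_y n L y) M X) \<le> (\<Sum>i=1..n. LVaR (L i) M (Xs i))"
proof -
  have "\<forall>i\<in>{1..n}. \<exists>r. LVaR (L i) M (Xs i) = ereal r
      \<and> (\<forall>x. r < x \<longrightarrow> measure M {\<omega>\<in>space M. Xs i \<omega> > x} \<le> L i x)"
  proof
    fix i assume "i \<in> {1..n}"
    with assms obtain r where "LVaR (L i) M (Xs i) = ereal r"
      "\<And>x. r < x \<Longrightarrow> measure M {\<omega>\<in>space M. Xs i \<omega> > x} \<le> L i x"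
      using LVaR_real[of "L i" "Xs i"] by blast
    then show "\<exists>r. LVaR (L i) M (Xs i) = ereal r
        \<and> (\<forall>x. r < x \<longrightarrow> measure M {\<omega>\<in>space M. Xs i \<omega> > x} \<le> L i x)"
      by blast
  qed
  from bchoice[OF this] obtain r where r: "\<forall>i\<in>{1..n}. LVaR (L i) M (Xs i) = ereal (r i)
      \<and> (\<forall>x. r i < x \<longrightarrow> measure M {\<omega>\<in>space M. Xs i \<omega> > x} \<le> L i x)"
    by blast
  have "(INF y. LVaR (Lambda_y n L y) M X) \<le> ereal (\<Sum>i=1..n. r i) + ereal e" if "0 < e" for e
  proof -
    define d where "d i = r i + e / n" for i
    have "(INF y. LVaR (Lambda_y n L y) M X) \<le> LVaR (Lambda_y n L (\<lambda>k. \<Sum>i=1..k. d i)) M X"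
      by (rule INF_lower) simp
    also have "\<dots> \<le> ereal (\<Sum>i=1..n. d i)"
      using assms(1,4,5) r \<open>0 < e\<close>
      by (intro LVaR_Lambda_y_partial_sums_le) (auto simp: d_def)
    also have "(\<Sum>i=1..n. d i) = (\<Sum>i=1..n. r i) + e"
      using assms(1) by (simp add: d_def sum.distrib)
    finally show ?thesis
      by simp
  qed
  then have "(INF y. LVaR (Lambda_y n L y) M X) \<le> ereal (\<Sum>i=1..n. r i)"
    by (rule ereal_le_epsilon2)
  also have "\<dots> = (\<Sum>i=1..n. LVaR (L i) M (Xs i))"
    using r by (simp add: sum_ereal[symmetric] del: sum_ereal)
  finally show ?thesis .
qed

lemma infconv_le_sum:
  assumes "\<forall>i\<in>{1..n}. Xs i \<in> XX" "\<forall>\<omega>\<in>space M. (\<Sum>i=1..n. Xs i \<omega>) = X \<omega>"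
  shows "infconv M XX n \<rho> X \<le> (\<Sum>i=1..n. \<rho> i (Xs i))"
  unfolding infconv_def using assms by (intro Inf_lower CollectI exI[of _ Xs]) auto

lemma infconv_greatest:
  assumes "\<And>Xs. \<forall>i\<in>{1..n}. Xs i \<in> XX \<Longrightarrow> \<forall>\<omega>\<in>space M. (\<Sum>i=1..n. Xs i \<omega>) = X \<omega> \<Longrightarrow>
      c \<le> (\<Sum>i=1..n. \<rho> i (Xs i))"
  shows "c \<le> infconv M XX n \<rho> X"
  unfolding infconv_def using assms by (intro Inf_greatest) auto

lemma infconv_cong:
  assumes "space M = space M'" "\<And>i Z. i \<in> {1..n} \<Longrightarrow> Z \<in> XX \<Longrightarrow> \<rho> i Z = \<rho>' i Z"
  shows "infconv M XX n \<rho> X = infconv M' XX n \<rho>' X"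
proof -
  have "(\<Sum>i=1..n. \<rho> i (Xs i)) = (\<Sum>i=1..n. \<rho>' i (Xs i))" if "\<forall>i\<in>{1..n}. Xs i \<in> XX" for Xs
    using that assms(2) by (intro sum.cong) auto
  then show ?thesis
    unfolding infconv_def assms(1) image_Collect[symmetric]
    by (intro arg_cong[where f=Inf] image_cong) auto
qed

lemma admissible_space_density:
  "admissible_space M XX \<Longrightarrow> admissible_space (density M f) XX"
  by (auto simp: admissible_space_def subset_eq)

lemma admissible_space_indicator_shift:
  assumes "admissible_space M XX" "X \<in> XX" "A \<in> sets M"
  shows "(\<lambda>\<omega>. c + indicator A \<omega> * (X \<omega> - x)) \<in> XX"
proof -
  have "(\<lambda>\<omega>. X \<omega> - x) \<in> XX"
    using assms(1,2) by (simp add: admissible_space_def)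
  then have "(\<lambda>\<omega>. indicator A \<omega> * (X \<omega> - x)) \<in> XX"
    using assms(1,3) by (simp add: admissible_space_def)
  then show ?thesis
    using assms(1) by (simp add: admissible_space_def)
qed

lemma (in finite_measure) infconv_LVaR_le:
  fixes L :: "nat \<Rightarrow> real \<Rightarrow> real"
  assumes "atomless M" "1 \<le> n" "\<forall>i\<in>{1..n}. \<forall>t. 0 \<le> L i t"
    and XX: "admissible_space M XX" "X \<in> XX"
    and "measure M {\<omega>\<in>space M. X \<omega> > x} \<le> Lambda_y n L y x"
  shows "infconv M XX n (\<lambda>i. LVaR (L i) M) X \<le> ereal x"
proof -
  obtain d where d: "(\<Sum>i=1..n. d i) = x" "Lambda_y n L y x = (\<Sum>i=1..n. L i (d i))"
    using Lambda_y_as_sum[OF assms(2)] by blast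
  define B where "B = {\<omega>\<in>space M. X \<omega> > x}"
  have [measurable]: "X \<in> borel_measurable M"
    using XX by (auto simp: admissible_space_def)
  have "B \<in> sets M"
    unfolding B_def by measurable
  then obtain P where P: "\<forall>i\<in>{1..n}. P i \<in> sets M" "\<forall>i\<in>{1..n}. measure M (P i \<inter> B) \<le> L i (d i)"
    "disjoint_family_on P {1..n}" "(\<Union>i\<in>{1..n}. P i) = space M"
    using atomless_exists_partition[OF \<open>atomless M\<close>, of "{1..n}" B "\<lambda>i. L i (d i)"] assms d
    by (auto simp: B_def)
  define Xs where "Xs i = (\<lambda>\<omega>. d i + indicator (P i) \<omega> * (X \<omega> - x))" for i
  have Xs_XX: "\<forall>i\<in>{1..n}. Xs i \<in> XX"
    unfolding Xs_def using XX P(1) by (auto intro: admissible_space_indicator_shift)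
  have "(\<Sum>i=1..n. Xs i \<omega>) = X \<omega>" if "\<omega> \<in> space M" for \<omega>
  proof -
    have "(\<Sum>i=1..n. indicator (P i) \<omega> :: real) = 1"
      using indicator_UN_disjoint[OF _ P(3), of \<omega>] P(4) that by simp
    then show ?thesis
      using d(1) by (simp add: Xs_def sum.distrib flip: sum_distrib_right)
  qed
  then have "infconv M XX n (\<lambda>i. LVaR (L i) M) X \<le> (\<Sum>i=1..n. LVaR (L i) M (Xs i))"
    using Xs_XX by (intro infconv_le_sum) auto
  also have "\<dots> \<le> (\<Sum>i=1..n. ereal (d i))"
  proof (intro sum_mono)
    fix i assume i: "i \<in> {1..n}"
    have "{\<omega>\<in>space M. Xs i \<omega> > d i} = P i \<inter> B"
      using P(1) i sets.sets_into_space by (auto simp: Xs_def B_def indicator_def)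
    then show "LVaR (L i) M (Xs i) \<le> ereal (d i)"
      using P(2) i by (intro LVaR_le_of_tail_le) simp
  qed
  finally show ?thesis
    using d(1) by simp
qed

lemma (in finite_measure) infconv_LVaR:
  assumes "atomless M" "1 < measure M (space M)" "1 \<le> n" "\<forall>i\<in>{1..n}. L i \<in> H_I"
    and "admissible_space M XX" "X \<in> XX"
  shows "infconv M XX n (\<lambda>i. LVaR (L i) M) X = (INF y. LVaR (Lambda_y n L y) M X)"
proof (rule antisym)
  have "\<forall>i\<in>{1..n}. \<forall>t. 0 \<le> L i t"
    using assms(4) by (auto simp: H_I_def less_imp_le)
  then show "infconv M XX n (\<lambda>i. LVaR (L i) M) X \<le> (INF y. LVaR (Lambda_y n L y) M X)"
    using assms unfolding LVaR_def[of "Lambda_y n L _"]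
    by (intro INF_greatest Inf_greatest) (auto intro: infconv_LVaR_le)
  have "XX \<subseteq> borel_measurable M"
    using assms(5) by (simp add: admissible_space_def)
  then show "(INF y. LVaR (Lambda_y n L y) M X) \<le> infconv M XX n (\<lambda>i. LVaR (L i) M) X"
    using assms(2-4) by (intro infconv_greatest INF_LVaR_Lambda_y_le_sum) auto
qed

theorem mainTheorem17:
  fixes M :: "'a measure" and L :: "nat \<Rightarrow> real \<Rightarrow> real" and n :: nat
    and Y :: "'a \<Rightarrow> real" and XX :: "('a \<Rightarrow> real) set" and X :: "'a \<Rightarrow> real"
  assumes "prob_space M" and "atomless M"
    and "n \<ge> 2" and "\<forall>i\<in>{1..n}. L i \<in> H_I"
    and "Y \<in> borel_measurable M" and "\<forall>\<omega>\<in>space M. 0 \<le> Y \<omega>"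
    and "integrable M Y" and "1 < integral\<^sup>L M Y"
    and "admissible_space M XX" and "X \<in> XX"
  shows "infconv M XX n (\<lambda>i Z. SUP Q\<in>Pset M Y. LVaR (L i) Q Z) X
       = (INF y\<in>(UNIV :: (nat \<Rightarrow> real) set).
            Inf (ereal ` {x. integral\<^sup>L M (\<lambda>\<omega>. Y \<omega> * indicator {\<omega>\<in>space M. X \<omega> > x} \<omega>)
                               \<le> Lambda_y n L y x}))"
proof -
  define N where "N = density M Y"
  have [measurable]: "Y \<in> borel_measurable M" "X \<in> borel_measurable M"
    using assms(5,9,10) by (auto simp: admissible_space_def)
  have Y_nonneg: "AE \<omega> in M. 0 \<le> Y \<omega>"
    using assms(6) by (intro AE_I2) auto
  interpret N: finite_measure N
    unfolding N_def using assms(7) Y_nonneg by (rule finite_measure_density_integrable)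
  have "measure N (space M) = integral\<^sup>L M (\<lambda>\<omega>. Y \<omega> * indicator (space M) \<omega>)"
    unfolding N_def using assms(7) Y_nonneg by (intro measure_density_eq_integral) auto
  also have "\<dots> = integral\<^sup>L M Y"
    by (intro Bochner_Integration.integral_cong) auto
  finally have "1 < measure N (space N)"
    using assms(8) by (simp add: N_def)
  have "infconv M XX n (\<lambda>i Z. SUP Q\<in>Pset M Y. LVaR (L i) Q Z) X
      = infconv N XX n (\<lambda>i. LVaR (L i) N) X"
    using assms(4-9) unfolding N_def
    by (intro infconv_cong SUP_Pset_LVaR) (auto simp: admissible_space_def)
  also have "\<dots> = (INF y. LVaR (Lambda_y n L y) N X)"
    using \<open>1 < measure N (space N)\<close> assms(1-4,7,9,10) Y_nonneg unfolding N_def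
    by (intro N.infconv_LVaR[unfolded N_def] atomless_density admissible_space_density
        prob_space.finite_measure) auto
  also have "\<dots> = (INF y. Inf (ereal ` {x. integral\<^sup>L M (\<lambda>\<omega>. Y \<omega> *
      indicator {\<omega>\<in>space M. X \<omega> > x} \<omega>) \<le> Lambda_y n L y x}))"
    using assms(7) Y_nonneg by (simp add: N_def LVaR_density)
  finally show ?thesis .
qed

end
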